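(* For the R-GSAV/BDF$k$ scheme with the choice of $\zeta_0$ and $\gamma^{n+1}$ given in the context, suppose $R^n\le E(\phi^n)$ and $R^n\ge 0$. If at step $n$ one is in Case 1, 2 or 3 (i.e., not in Case 4), then $R^{n+1}=E(\phi^{n+1})$ and $$E(\phi^{n+1})=R^{n+1}\le R^n\le E(\phi^n).$$ In particular, the modified energy coincides with the original energy $E$ at step $n+1$, and $E$ does not increase over that step.
   Context: Setting: a dissipative system $\partial_t\phi+\mathcal A\phi+g(\phi)=0$ with $\mathcal A$ positive linear, satisfying $\frac{d}{dt}E_{tot}(\phi)=-\mathcal K(\phi)$, $\mathcal K(\phi)>0$, $E_{tot}\ge-C_0$, $E=E_{tot}+C_0>0$. BDF$k$ data $\alpha_k,A_k,B_k$ ($1\le k\le5$): $k=1$: $1,\ \phi^n,\ \phi^n$; $k=2$: $\frac32,\ 2\phi^n-\frac12\phi^{n-1},\ 2\phi^n-\phi^{n-1}$; $k=3$: $\frac{11}6,\ 3\phi^n-\frac32\phi^{n-1}+\frac13\phi^{n-2},\ 3\phi^n-3\phi^{n-1}+\phi^{n-2}$; $k=4$: $\frac{25}{12},\ 4\phi^n-3\phi^{n-1}+\frac43\phi^{n-2}-\frac14\phi^{n-3},\ 4\phi^n-6\phi^{n-1}+4\phi^{n-2}-\phi^{n-3}$; $k=5$: $\frac{137}{60},\ 5\phi^n-5\phi^{n-1}+\frac{10}3\phi^{n-2}-\frac54\phi^{n-3}+\frac15\phi^{n-4},\ 5\phi^n-10\phi^{n-1}+10\phi^{n-2}-5\phi^{n-3}+\phi^{n-4}$.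 Scheme: Step 1: $\frac{\alpha_k\bar\phi^{n+1}-A_k(\phi^n)}{\delta t}+\mathcal A\bar\phi^{n+1}+g[B_k(\bar\phi^n)]=0$; $\frac{\tilde R^{n+1}-R^n}{\delta t}=-\frac{\tilde R^{n+1}}{E(\bar\phi^{n+1})}\mathcal K(\bar\phi^{n+1})$; $\xi^{n+1}=\tilde R^{n+1}/E(\bar\phi^{n+1})$, $\eta_k^{n+1}=1-(1-\xi^{n+1})^{k+1}$, $\phi^{n+1}=\eta_k^{n+1}\bar\phi^{n+1}$. Step 2: $R^{n+1}=\zeta_0\tilde R^{n+1}+(1-\zeta_0)E(\phi^{n+1})$, where: Case 1 ($\tilde R^{n+1}=E(\phi^{n+1})$): $\zeta_0=0$, $\gamma^{n+1}=\frac{\tilde R^{n+1}\mathcal K(\bar\phi^{n+1})}{E(\bar\phi^{n+1})\mathcal K(\phi^{n+1})}$; Case 2 ($\tilde R^{n+1}>E(\phi^{n+1})$): $\zeta_0=0$, $\gamma^{n+1}=\frac{\tilde R^{n+1}-E(\phi^{n+1})}{\delta t\mathcal K(\phi^{n+1})}+\frac{\tilde R^{n+1}\mathcal K(\bar\phi^{n+1})}{E(\bar\phi^{n+1})\mathcal K(\phi^{n+1})}$; Case 3 ($\tilde R^{n+1}<E(\phi^{n+1})$ and $\tilde R^{n+1}-E(\phi^{n+1})+\delta t\frac{\tilde R^{n+1}}{E(\bar\phi^{n+1})}\mathcal K(\bar\phi^{n+1})\ge0$): $\zeta_0=0$, $\gamma^{n+1}$ as in Case 2; Case 4 (otherwise):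 $\zeta_0=1-\frac{\delta t\tilde R^{n+1}\mathcal K(\bar\phi^{n+1})}{E(\bar\phi^{n+1})(E(\phi^{n+1})-\tilde R^{n+1})}$, $\gamma^{n+1}=0$. *)

theory Defs
  imports "HOL-Analysis.Analysis"
begin

definition bdf_alpha :: "nat \<Rightarrow> real" where
  "bdf_alpha k = (if k = 1 then 1 else if k = 2 then 3/2 else if k = 3 then 11/6
                  else if k = 4 then 25/12 else 137/60)"

definition bdf_A :: "nat \<Rightarrow> (nat \<Rightarrow> 'v::real_vector) \<Rightarrow> nat \<Rightarrow> 'v" where
  "bdf_A k phi n =
    (if k = 1 then phi n
     else if k = 2 then 2 *\<^sub>R phi n - (1/2) *\<^sub>R phi (n-1)
     else if k = 3 then 3 *\<^sub>R phi n - (3/2) *\<^sub>R phi (n-1) + (1/3) *\<^sub>R phi (n-2)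
     else if k = 4 then 4 *\<^sub>R phi n - 3 *\<^sub>R phi (n-1) + (4/3) *\<^sub>R phi (n-2)
                        - (1/4) *\<^sub>R phi (n-3)
     else 5 *\<^sub>R phi n - 5 *\<^sub>R phi (n-1) + (10/3) *\<^sub>R phi (n-2)
          - (5/4) *\<^sub>R phi (n-3) + (1/5) *\<^sub>R phi (n-4))"

definition bdf_B :: "nat \<Rightarrow> (nat \<Rightarrow> 'v::real_vector) \<Rightarrow> nat \<Rightarrow> 'v" where
  "bdf_B k phi n =
    (if k = 1 then phi n
     else if k = 2 then 2 *\<^sub>R phi n - phi (n-1)
     else if k = 3 then 3 *\<^sub>R phi n - 3 *\<^sub>R phi (n-1) + phi (n-2)
     else if k = 4 then 4 *\<^sub>R phi n - 6 *\<^sub>R phi (n-1) + 4 *\<^sub>R phi (n-2) - phi (n-3)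
     else 5 *\<^sub>R phi n - 10 *\<^sub>R phi (n-1) + 10 *\<^sub>R phi (n-2)
          - 5 *\<^sub>R phi (n-3) + phi (n-4))"

definition rgsav_case4 :: "real \<Rightarrow> real \<Rightarrow> real \<Rightarrow> real \<Rightarrow> real \<Rightarrow> bool" where
  "rgsav_case4 dt Rt Ebar Kbar Enew \<longleftrightarrow>
     Rt < Enew \<and> \<not> (Rt - Enew + dt * (Rt / Ebar) * Kbar \<ge> 0)"

definition rgsav_zeta0 :: "real \<Rightarrow> real \<Rightarrow> real \<Rightarrow> real \<Rightarrow> real \<Rightarrow> real" where
  "rgsav_zeta0 dt Rt Ebar Kbar Enew =
     (if rgsav_case4 dt Rt Ebar Kbar Enew
      then 1 - (dt * Rt * Kbar) / (Ebar * (Enew - Rt)) else 0)"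

end

theory Submission
  imports Defs
begin

text \<open>Step 1 enters only through the scalar relation defining the auxiliary value \<open>Rt\<close>:
  solving it gives \<open>Rt = R n / (1 + dt K/E)\<close> with \<open>K, E\<close> evaluated at the intermediate
  solution, hence \<open>0 \<le> Rt \<le> R n\<close>; the same relation turns the Case 3 condition into
  \<open>E (phi (n+1)) \<le> R n\<close>. Outside Case 4, \<open>zeta0 = 0\<close> makes \<open>R (n+1)\<close> the true energy.\<close>

lemma rgsav_zeta0_eq_0:
  "\<not> rgsav_case4 dt Rt Ebar Kbar Enew \<Longrightarrow> rgsav_zeta0 dt Rt Ebar Kbar Enew = 0"
  by (simp add: rgsav_zeta0_def)

lemma sav_relaxation_eq:
  fixes dt Rt R0 Ebar Kbar :: real
  assumes "dt > 0" and "(Rt - R0) / dt = - (Rt / Ebar) * Kbar"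
  shows "Rt + dt * (Rt / Ebar) * Kbar = R0"
  using assms by (simp add: field_simps)

lemma sav_relaxation_bounds:
  fixes dt Rt R0 Ebar Kbar :: real
  assumes "dt > 0" "Ebar > 0" "Kbar > 0" "R0 \<ge> 0"
    and "Rt + dt * (Rt / Ebar) * Kbar = R0"
  shows "0 \<le> Rt" "Rt \<le> R0"
proof -
  have factor_pos: "1 + dt * Kbar / Ebar > 0"
    using assms(1-3) by (simp add: add_pos_pos)
  have "Rt * (1 + dt * Kbar / Ebar) = R0"
    using assms(5) by (simp add: algebra_simps)
  with factor_pos \<open>R0 \<ge> 0\<close> show "0 \<le> Rt"
    by (metis mult_neg_pos not_le)
  with assms(1-3) have "dt * (Rt / Ebar) * Kbar \<ge> 0"
    by simp
  with assms(5) show "Rt \<le> R0"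
    by linarith
qed

lemma not_rgsav_case4_energy_le:
  fixes dt Rt R0 Ebar Kbar Enew :: real
  assumes "\<not> rgsav_case4 dt Rt Ebar Kbar Enew"
    and "Rt + dt * (Rt / Ebar) * Kbar = R0" and "Rt \<le> R0"
  shows "Enew \<le> R0"
  using assms unfolding rgsav_case4_def by linarith

theorem mainTheorem2:
  fixes Aop g :: "'v::real_inner \<Rightarrow> 'v"
    and E K :: "'v \<Rightarrow> real"
    and phi phibar :: "nat \<Rightarrow> 'v"
    and R :: "nat \<Rightarrow> real"
    and Rt dt :: real
    and k n :: nat
  assumes lin: "linear Aop"
    and Apos: "\<And>v. v \<noteq> 0 \<Longrightarrow> inner (Aop v) v > 0"
    and Epos: "\<And>v. E v > 0"
    and Kpos: "\<And>v. K v > 0"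
    and dt: "dt > 0"
    and k: "1 \<le> k" "k \<le> 5" "k \<le> n + 1"
    and step1: "(bdf_alpha k *\<^sub>R phibar (n+1) - bdf_A k phi n) /\<^sub>R dt
                 + Aop (phibar (n+1)) + g (bdf_B k phibar n) = 0"
    and Rtilde: "(Rt - R n) / dt = - (Rt / E (phibar (n+1))) * K (phibar (n+1))"
    and update: "phi (n+1) =
          (1 - (1 - Rt / E (phibar (n+1))) ^ (k+1)) *\<^sub>R phibar (n+1)"
    and step2: "R (n+1) =
          rgsav_zeta0 dt Rt (E (phibar (n+1))) (K (phibar (n+1))) (E (phi (n+1))) * Rt
          + (1 - rgsav_zeta0 dt Rt (E (phibar (n+1))) (K (phibar (n+1))) (E (phi (n+1))))
            * E (phi (n+1))"
    and hypR: "R n \<le> E (phi n)" "R n \<ge> 0"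
    and notcase4: "\<not> rgsav_case4 dt Rt (E (phibar (n+1))) (K (phibar (n+1))) (E (phi (n+1)))"
  shows "R (n+1) = E (phi (n+1)) \<and> E (phi (n+1)) = R (n+1) \<and> R (n+1) \<le> R n \<and> R n \<le> E (phi n)"
proof -
  have R_next: "R (n+1) = E (phi (n+1))"
    using step2 rgsav_zeta0_eq_0 [OF notcase4] by simp
  have relation: "Rt + dt * (Rt / E (phibar (n+1))) * K (phibar (n+1)) = R n"
    using sav_relaxation_eq [OF dt Rtilde] .
  have "Rt \<le> R n"
    using sav_relaxation_bounds(2) [OF dt Epos Kpos hypR(2) relation] .
  then have "E (phi (n+1)) \<le> R n"
    by (rule not_rgsav_case4_energy_le [OF notcase4 relation])
  with R_next hypR(1) show ?thesis
    by simp
qed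

end
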